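(* Let $q$ be an odd prime power, $d$ an even positive integer, and $A\subset\mathbb F_q^d$. Let $\mathcal{ZR}(A)$ be the number of pairs $(x,y)\in A\times A$ with $\|x-y\|=0$, and let $\Omega^0(A)=\sum_{m\in\mathbb F_q^d:\ \|m\|=0}|\widehat A(m)|^2$. \begin{enumerate} \item If $d\equiv 2\pmod 4$ and $q\equiv 3\pmod 4$, then $$\frac{\mathcal{ZR}(A)}{2}=\frac{|A|^2}{2q}-\frac{q^{\frac{3d}{2}}}{2}\Omega^0(A)+\frac{q^{\frac{d-2}{2}}|A|}{2}.$$ \item If $d\equiv 0\pmod 4$, or $d\equiv 2\pmod 4$ and $q\equiv 1\pmod 4$, then $$\frac{\mathcal{ZR}(A)}{2}=\frac{|A|^2}{2q}+\frac{q^{\frac{3d}{2}}}{2}\Omega^0(A)-\frac{q^{\frac{d-2}{2}}|A|}{2}.$$ \end{enumerate}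
   Context: For $x\in\mathbb F_q^d$, $\|x\|=x_1^2+\cdots+x_d^2$. $\chi$ is the canonical nontrivial additive character of $\mathbb F_q$, and for $A\subset\mathbb F_q^d$, $\widehat{A}(m)=q^{-d}\sum_{x\in A}\chi(-m\cdot x)$ is the Fourier transform of the indicator function of $A$. *)

theory Defs
  imports "HOL-Analysis.Analysis"
begin

text \<open>Finite field 'a = F_q, q = CARD('a) = p^r with p = CHAR('a).\<close>

definition ff_degree :: "'a::{field,finite} itself \<Rightarrow> nat" where
  "ff_degree _ = (THE r. CHAR('a) ^ r = CARD('a))"

text \<open>Absolute trace F_q -> F_p (as an element of F_q lying in the prime field).\<close>
definition ff_trace :: "'a::{field,finite} \<Rightarrow> 'a" where
  "ff_trace x = (\<Sum>i<ff_degree TYPE('a). x ^ (CHAR('a) ^ i))"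

definition ff_trace_nat :: "'a::{field,finite} \<Rightarrow> nat" where
  "ff_trace_nat x = (THE k. k < CHAR('a) \<and> of_nat k = ff_trace x)"

definition canon_char :: "'a::{field,finite} \<Rightarrow> complex" where
  "canon_char x = cis (2 * pi * real (ff_trace_nat x) / real CHAR('a))"

definition qnorm :: "'a::{field,finite} ^ 'n \<Rightarrow> 'a" where
  "qnorm x = (\<Sum>i\<in>UNIV. (x $ i)^2)"

definition dotp :: "'a::{field,finite} ^ 'n \<Rightarrow> 'a ^ 'n \<Rightarrow> 'a" where
  "dotp m x = (\<Sum>i\<in>UNIV. m $ i * x $ i)"

definition ff_fourier :: "('a::{field,finite} ^ 'n::finite) set \<Rightarrow> 'a ^ 'n \<Rightarrow> complex" where
  "ff_fourier A m = (1 / of_nat CARD('a) ^ CARD('n)) * (\<Sum>x\<in>A. canon_char (- dotp m x))"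

definition ZR :: "('a::{field,finite} ^ 'n::finite) set \<Rightarrow> nat" where
  "ZR A = card {(x, y). x \<in> A \<and> y \<in> A \<and> qnorm (x - y) = 0}"

definition Omega0 :: "('a::{field,finite} ^ 'n::finite) set \<Rightarrow> real" where
  "Omega0 A = (\<Sum>m\<in>{m. qnorm m = 0}. (cmod (ff_fourier A m))^2)"

end

theory Submission
  imports Defs "HOL-Computational_Algebra.Polynomial" "HOL-Computational_Algebra.Primes"
    "HOL-Number_Theory.Cong" "HOL-Library.Z2"
begin

text \<open>
  Expanding \<open>|\<^bold>A(m)|^2\<close> and exchanging the sums, \<open>q^(2d) \<Omega>0(A)\<close> is the sum over
  \<open>x, y \<in> A\<close> of \<open>S(y - x)\<close>, where \<open>S(u) = \<Sum>{\<chi>(m\<cdot>u) | \<parallel>m\<parallel> = 0}\<close>. Writing the indicator of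
  the null cone as \<open>q^(-1) \<Sum>\<^sub>t \<chi>(t \<parallel>m\<parallel>)\<close> and completing the square in each coordinate gives
  \<open>q S(u) = q^d [u = 0] + G^d (q [\<parallel>u\<parallel> = 0] - 1)\<close>, where \<open>G = G(t) = \<Sum>\<^sub>s \<chi>(t s^2)\<close> is the
  quadratic Gauss sum. For \<open>t \<noteq> 0\<close>, \<open>G(t)^2 = q\<close> if \<open>-1\<close> is a square in \<open>\<FF>\<^sub>q\<close>, i.e.\ if
  \<open>q \<equiv> 1 (mod 4)\<close>, and \<open>G(t)^2 = -q\<close> otherwise; hence \<open>G^d = \<epsilon> q^(d/2)\<close> with \<open>\<epsilon> = -1\<close>
  exactly when \<open>d/2\<close> is odd and \<open>q \<equiv> 3 (mod 4)\<close>. Summing over \<open>x, y\<close> yields a linear relation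
  between \<open>ZR(A)\<close> and \<open>\<Omega>0(A)\<close>, which is solved for \<open>ZR(A)\<close>.

  That the canonical character is a nontrivial additive character rests on the structure of
  \<open>\<FF>\<^sub>q\<close>: \<open>q\<close> is a power of the characteristic \<open>p\<close>, and the trace takes values in the prime
  field without vanishing identically.
\<close>

section \<open>Finite fields\<close>

lemma prime_CHAR_finite_field: "prime CHAR('a::{field,finite})"
  by (simp add: finite_imp_CHAR_pos prime_CHAR_semidom)

lemma CHAR_finite_field_ge_2: "CHAR('a::{field,finite}) \<ge> 2"
  using prime_CHAR_finite_field prime_ge_2_nat by blast

lemma of_nat_inj_below_CHAR:
  assumes "a < CHAR('a)" "b < CHAR('a)" "(of_nat a :: 'a::{field,finite}) = of_nat b"
  shows "a = b"
  using assms of_nat_eq_iff_cong_CHAR[of a b, where 'a='a] by (simp add: cong_def)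

lemma power_CARD_eq_self: "(x :: 'a::{field,finite}) ^ CARD('a) = x"
proof (cases "x = 0")
  case False
  let ?U = "UNIV - {0::'a}"
  have "(\<Prod>y\<in>?U. x * y) = \<Prod>?U"
    by (rule prod.reindex_bij_witness[of _ "\<lambda>y. y / x" "\<lambda>y. x * y"]) (use False in auto)
  moreover have "\<Prod>?U \<noteq> 0" by simp
  ultimately have "x ^ card ?U = 1"
    by (simp add: prod.distrib)
  moreover have "CARD('a) = Suc (card ?U)"
    by (simp add: card_Diff_singleton finite_UNIV_card_ge_0)
  ultimately show ?thesis by (metis power_Suc mult_1_right)
qed (simp add: finite_UNIV_card_ge_0)

lemma of_nat_power_CHAR: "(of_nat k :: 'a::{field,finite}) ^ CHAR('a) = of_nat k"
proof (induction k)
  case 0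
  then show ?case using CHAR_finite_field_ge_2[where 'a='a] by simp
next
  case (Suc k)
  have "(of_nat (Suc k) :: 'a) ^ CHAR('a) = of_nat k ^ CHAR('a) + 1 ^ CHAR('a)"
    by (simp add: freshmans_dream prime_CHAR_finite_field add.commute)
  with Suc show ?case by simp
qed

text \<open>The \<open>p\<close> elements of the prime field are roots of \<open>X^p - X\<close>, which has no other roots.\<close>
lemma power_CHAR_eq_self_imp_of_nat:
  fixes y :: "'a::{field,finite}"
  assumes "y ^ CHAR('a) = y"
  shows "\<exists>k<CHAR('a). y = of_nat k"
proof -
  let ?p = "CHAR('a)"
  define P :: "'a poly" where "P = monom 1 ?p - [:0, 1:]"
  have p2: "?p \<ge> 2" by (rule CHAR_finite_field_ge_2)
  have "coeff P ?p = 1" using p2 by (simp add: P_def coeff_monom coeff_pCons split: nat.split)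
  then have "P \<noteq> 0" by auto
  moreover have "degree P \<le> ?p" unfolding P_def
    by (intro degree_diff_le) (use p2 in \<open>auto simp: degree_monom_le\<close>)
  moreover have roots: "{x. poly P x = 0} = {x. x ^ ?p = x}" by (auto simp: P_def poly_monom)
  ultimately have card_roots: "card {x::'a. x ^ ?p = x} \<le> ?p"
    using card_poly_roots_bound by fastforce
  define S where "S = (of_nat ` {..<?p} :: 'a set)"
  have "card S = ?p" unfolding S_def
    by (subst card_image) (auto intro!: inj_onI intro: of_nat_inj_below_CHAR)
  moreover have "S \<subseteq> {x. x ^ ?p = x}" unfolding S_def using of_nat_power_CHAR by auto
  ultimately have "S = {x. x ^ ?p = x}"
    using card_roots by (intro card_seteq) auto
  then show ?thesis using assms unfolding S_def by auto
qed

definition add_closed :: "'a::monoid_add set \<Rightarrow> bool" where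
  "add_closed H \<longleftrightarrow> 0 \<in> H \<and> (\<forall>x\<in>H. \<forall>y\<in>H. x + y \<in> H)"

lemma add_closed_of_nat_mult:
  fixes H :: "'a::semiring_1 set"
  assumes "add_closed H" "x \<in> H"
  shows "of_nat c * x \<in> H"
proof (induction c)
  case (Suc c)
  then have "x + of_nat c * x \<in> H" using assms by (simp add: add_closed_def)
  then show ?case by (simp add: distrib_right add.commute)
qed (use assms in \<open>simp add: add_closed_def\<close>)

lemma add_closed_uminus:
  fixes H :: "'a::{field,finite} set"
  assumes "add_closed H" "x \<in> H"
  shows "- x \<in> H"
proof -
  have "of_nat (CHAR('a) - 1) * x = - x"
    using CHAR_finite_field_ge_2[where 'a='a] by (simp add: of_nat_diff)
  then show ?thesis using add_closed_of_nat_mult[OF assms, of "CHAR('a) - 1"] by simp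
qed

text \<open>The sum \<open>h + j x\<close> determines \<open>j < p\<close> because the inverse of a nonzero element of the
  prime field lies in the prime field.\<close>
lemma inj_on_add_of_nat_mult:
  fixes H :: "'a::{field,finite} set"
  assumes H: "add_closed H" and x: "x \<notin> H"
  shows "inj_on (\<lambda>(h, j). h + of_nat j * x) (H \<times> {..<CHAR('a)})"
proof (rule inj_onI, clarify)
  let ?p = "CHAR('a)"
  fix h1 j1 h2 j2
  assume h: "h1 \<in> H" "h2 \<in> H" and j: "j1 < ?p" "j2 < ?p"
    and eq: "h1 + of_nat j1 * x = h2 + of_nat j2 * x"
  have "j1 = j2"
  proof (rule ccontr)
    assume "j1 \<noteq> j2"
    define c :: 'a where "c = of_nat j1 - of_nat j2"
    have "c \<noteq> 0" using \<open>j1 \<noteq> j2\<close> of_nat_inj_below_CHAR[OF j] by (auto simp: c_def)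
    have "c * x = h2 + - h1" using eq by (simp add: c_def algebra_simps)
    then have "c * x \<in> H" using H h(2) add_closed_uminus[OF H h(1)] by (metis add_closed_def)
    have "c = of_nat (j1 + (?p - j2))" using j by (simp add: c_def of_nat_diff)
    then have "c ^ ?p = c" by (metis of_nat_power_CHAR)
    then have "inverse c ^ ?p = inverse c" by (simp add: power_inverse)
    then obtain k where "inverse c = of_nat k" using power_CHAR_eq_self_imp_of_nat by blast
    then have "inverse c * (c * x) \<in> H" using add_closed_of_nat_mult[OF H \<open>c * x \<in> H\<close>] by simp
    then show False using x \<open>c \<noteq> 0\<close> by (simp flip: mult.assoc)
  qed
  then show "h1 = h2 \<and> j1 = j2" using eq by simp
qed

lemma add_closed_adjoin:
  fixes H :: "'a::{field,finite} set"
  assumes H: "add_closed H" and x: "x \<notin> H"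
  defines "H' \<equiv> (\<lambda>(h, j). h + of_nat j * x) ` (H \<times> {..<CHAR('a)})"
  shows "add_closed H'" and "card H' = CHAR('a) * card H" and "insert x H \<subseteq> H'"
proof -
  let ?p = "CHAR('a)"
  have in_H': "h + of_nat j * x \<in> H'" if "h \<in> H" for h j
  proof -
    have "h + of_nat j * x = h + of_nat (j mod ?p) * x"
      by (simp add: of_nat_eq_iff_cong_CHAR cong_def)
    moreover have "j mod ?p < ?p" using CHAR_finite_field_ge_2[where 'a='a] by simp
    ultimately show ?thesis using that unfolding H'_def by force
  qed
  show "insert x H \<subseteq> H'"
    using in_H'[of 0 1] in_H'[of _ 0] H by (auto simp: add_closed_def)
  show "add_closed H'"
    unfolding add_closed_def
  proof (intro conjI ballI)
    show "0 \<in> H'" using in_H'[of 0 0] H by (simp add: add_closed_def)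
  next
    fix a b assume "a \<in> H'" "b \<in> H'"
    then obtain h1 j1 h2 j2 where "h1 \<in> H" "h2 \<in> H" "a = h1 + of_nat j1 * x" "b = h2 + of_nat j2 * x"
      unfolding H'_def by auto
    moreover have "h1 + h2 \<in> H" using H \<open>h1 \<in> H\<close> \<open>h2 \<in> H\<close> by (simp add: add_closed_def)
    ultimately show "a + b \<in> H'"
      using in_H'[of "h1 + h2" "j1 + j2"] by (simp add: algebra_simps)
  qed
  show "card H' = ?p * card H"
    unfolding H'_def using inj_on_add_of_nat_mult[OF H x]
    by (simp add: card_image card_cartesian_product)
qed

lemma card_add_closed_times_CHAR_power:
  fixes H :: "'a::{field,finite} set"
  shows "add_closed H \<Longrightarrow> \<exists>k. card H * CHAR('a) ^ k = CARD('a)"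
proof (induction "card (UNIV - H)" arbitrary: H rule: less_induct)
  case less
  show ?case
  proof (cases "H = UNIV")
    case True
    then show ?thesis by (intro exI[of _ 0]) simp
  next
    case False
    then obtain x where x: "x \<notin> H" by auto
    define H' where "H' = (\<lambda>(h, j). h + of_nat j * x) ` (H \<times> {..<CHAR('a)})"
    note adjoin = add_closed_adjoin[OF less.prems x, folded H'_def]
    have "card (UNIV - H') < card (UNIV - H)"
      using adjoin(3) x by (intro psubset_card_mono) auto
    then obtain k where "card H' * CHAR('a) ^ k = CARD('a)"
      using less.hyps adjoin(1) by blast
    then have "card H * CHAR('a) ^ Suc k = CARD('a)" using adjoin(2) by (simp add: algebra_simps)
    then show ?thesis by blast
  qed
qed

lemma CHAR_power_ff_degree: "CHAR('a) ^ ff_degree TYPE('a) = CARD('a::{field,finite})"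
proof -
  obtain r where r: "CHAR('a) ^ r = CARD('a)"
    using card_add_closed_times_CHAR_power[of "{0::'a}"] by (auto simp: add_closed_def)
  have "CHAR('a) > 1" using CHAR_finite_field_ge_2[where 'a='a] by simp
  then have "\<exists>!r. CHAR('a) ^ r = CARD('a)"
    using r by (metis power_inject_exp)
  then show ?thesis unfolding ff_degree_def by (rule theI')
qed

lemma ff_degree_pos: "ff_degree TYPE('a::{field,finite}) > 0"
proof -
  have "CARD('a) \<noteq> 1"
    using card_mono[of UNIV "{0::'a, 1}"] by auto
  then show ?thesis using CHAR_power_ff_degree[where 'a='a] by (cases "ff_degree TYPE('a)") auto
qed

lemma two_neq_zero_if_odd_CARD:
  assumes "odd CARD('a::{field,finite})"
  shows "(2::'a) \<noteq> 0"
proof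
  assume "(2::'a) = 0"
  then have "CHAR('a) dvd 2" using of_nat_eq_0_iff_char_dvd[of 2, where 'a='a] by simp
  then have "CHAR('a) = 2"
    using prime_CHAR_finite_field[where 'a='a] by (simp add: primes_dvd_imp_eq)
  then have "even CARD('a)"
    using CHAR_power_ff_degree[where 'a='a] ff_degree_pos[where 'a='a] by (metis dvd_power)
  with assms show False by simp
qed

lemma four_neq_zero_if_odd_CARD:
  assumes "odd CARD('a::{field,finite})"
  shows "(4::'a) \<noteq> 0"
  using power_not_zero[OF two_neq_zero_if_odd_CARD[OF assms], of 2] by simp


section \<open>The canonical additive character\<close>

lemma ff_trace_add: "ff_trace (x + y) = ff_trace x + ff_trace (y :: 'a::{field,finite})"
  unfolding ff_trace_def by (simp add: sum.distrib freshmans_dream'[OF prime_CHAR_finite_field])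

lemma ff_trace_power_CHAR: "ff_trace (x :: 'a::{field,finite}) ^ CHAR('a) = ff_trace x"
proof -
  let ?p = "CHAR('a)" and ?r = "ff_degree TYPE('a)"
  have "ff_trace x ^ ?p = (\<Sum>i<?r. x ^ (?p ^ Suc i))"
    unfolding ff_trace_def freshmans_dream_sum[OF prime_CHAR_finite_field refl]
    by (simp add: power_mult[symmetric] mult.commute)
  also have "\<dots> = (\<Sum>i<Suc ?r. x ^ (?p ^ i)) - x"
    by (subst sum.lessThan_Suc_shift) simp
  also have "\<dots> = (\<Sum>i<?r. x ^ (?p ^ i)) + x ^ (?p ^ ?r) - x"
    by simp
  also have "x ^ (?p ^ ?r) = x" by (simp add: CHAR_power_ff_degree power_CARD_eq_self)
  finally show ?thesis unfolding ff_trace_def by simp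
qed

lemma ff_trace_nat_less: "ff_trace_nat (x :: 'a::{field,finite}) < CHAR('a)"
  and of_nat_ff_trace_nat: "of_nat (ff_trace_nat x) = ff_trace x"
proof -
  obtain k where "k < CHAR('a)" "ff_trace x = of_nat k"
    using power_CHAR_eq_self_imp_of_nat[OF ff_trace_power_CHAR] by blast
  then have "\<exists>!k. k < CHAR('a) \<and> of_nat k = ff_trace x"
    using of_nat_inj_below_CHAR[where 'a='a] by (intro ex1I[of _ k]) auto
  then have "ff_trace_nat x < CHAR('a) \<and> of_nat (ff_trace_nat x) = ff_trace x"
    unfolding ff_trace_nat_def by (rule theI')
  then show "ff_trace_nat x < CHAR('a)" "of_nat (ff_trace_nat x) = ff_trace x" by auto
qed

text \<open>The trace is a polynomial of degree \<open>p^(r-1) < q\<close>, so it cannot vanish on all of \<open>\<FF>\<^sub>q\<close>.\<close>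
lemma ex_ff_trace_nonzero: "\<exists>x::'a::{field,finite}. ff_trace x \<noteq> 0"
proof (rule ccontr)
  assume "\<nexists>x::'a. ff_trace x \<noteq> 0"
  let ?p = "CHAR('a)" and ?r = "ff_degree TYPE('a)"
  define P :: "'a poly" where "P = (\<Sum>i<?r. monom 1 (?p ^ i))"
  have r: "?r > 0" by (rule ff_degree_pos)
  have p: "?p > 1" using CHAR_finite_field_ge_2[where 'a='a] by simp
  have "coeff P (?p ^ (?r - 1)) = (\<Sum>i<?r. if i = ?r - 1 then 1 else 0)"
    unfolding P_def coeff_sum coeff_monom
    by (intro sum.cong refl) (use p in \<open>auto simp: power_inject_exp\<close>)
  also have "\<dots> = 1" using r by simp
  finally have "P \<noteq> 0" by auto
  moreover have "degree P \<le> ?p ^ (?r - 1)" unfolding P_def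
    by (intro degree_sum_le) (use p in \<open>auto intro!: order_trans[OF degree_monom_le] power_increasing\<close>)
  moreover have "{x. poly P x = 0} = UNIV"
    using \<open>\<nexists>x. ff_trace x \<noteq> 0\<close> by (auto simp: P_def poly_sum poly_monom ff_trace_def)
  ultimately have "CARD('a) \<le> ?p ^ (?r - 1)" using card_poly_roots_bound[of P] by simp
  moreover have "?p ^ (?r - 1) < ?p ^ ?r" using p r by (intro power_strict_increasing) auto
  ultimately show False by (simp add: CHAR_power_ff_degree)
qed

lemma cis_2pi_mod:
  assumes "p > 0"
  shows "cis (2 * pi * real (n mod p) / real p) = cis (2 * pi * real n / real p)"
proof -
  have n: "real n = real (n mod p) + real p * real (n div p)"
    by (metis mod_mult_div_eq of_nat_add of_nat_mult)
  have "2 * pi * real n / real p = 2 * pi * real (n mod p) / real p + 2 * pi * real (n div p)"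
    using assms by (subst n) (simp add: field_simps)
  then show ?thesis by (simp add: cis_mult[symmetric])
qed

lemma canon_char_add: "canon_char (x + y) = canon_char x * canon_char (y :: 'a::{field,finite})"
proof -
  let ?p = "CHAR('a)"
  have p: "?p > 0" using CHAR_finite_field_ge_2[where 'a='a] by simp
  have "[ff_trace_nat (x + y) = ff_trace_nat x + ff_trace_nat y] (mod ?p)"
    by (simp add: of_nat_eq_iff_cong_CHAR[where 'a='a, symmetric] of_nat_ff_trace_nat ff_trace_add)
  then have "ff_trace_nat (x + y) = (ff_trace_nat x + ff_trace_nat y) mod ?p"
    using ff_trace_nat_less[of "x + y"] by (simp add: cong_def)
  then have "canon_char (x + y) = cis (2 * pi * real (ff_trace_nat x + ff_trace_nat y) / real ?p)"
    unfolding canon_char_def by (simp only: cis_2pi_mod[OF p])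
  then show ?thesis
    unfolding canon_char_def cis_mult by (simp add: add_divide_distrib distrib_left)
qed

lemma norm_canon_char [simp]: "norm (canon_char x) = 1"
  by (simp add: canon_char_def)

lemma canon_char_0 [simp]: "canon_char (0 :: 'a::{field,finite}) = 1"
proof -
  have "canon_char (0::'a) = 0 \<or> canon_char (0::'a) = 1"
    using canon_char_add[of "0::'a" 0] by simp
  then show ?thesis by (metis norm_canon_char norm_zero zero_neq_one)
qed

lemma canon_char_uminus: "canon_char (- x) = cnj (canon_char (x :: 'a::{field,finite}))"
proof -
  have "canon_char (- x) * canon_char x = 1" by (simp flip: canon_char_add)
  moreover have "cnj (canon_char x) * canon_char x = 1"
    using complex_norm_square[of "canon_char x"] by (simp add: mult.commute)
  ultimately show ?thesis using canon_char_0 norm_canon_char[of x]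
    by (metis mult_right_cancel norm_zero zero_neq_one)
qed

lemma canon_char_sum: "canon_char (\<Sum>i\<in>I. f i) = (\<Prod>i\<in>I. canon_char (f i :: 'a::{field,finite}))"
  by (induction I rule: infinite_finite_induct) (auto simp: canon_char_add)

lemma ex_canon_char_neq_1: "\<exists>a::'a::{field,finite}. canon_char a \<noteq> 1"
proof -
  obtain x :: 'a where "ff_trace x \<noteq> 0" using ex_ff_trace_nonzero by blast
  define k where "k = ff_trace_nat x"
  have "k < CHAR('a)" by (simp add: k_def ff_trace_nat_less)
  moreover have "k \<noteq> 0"
    using \<open>ff_trace x \<noteq> 0\<close> of_nat_ff_trace_nat[of x] by (metis k_def of_nat_0)
  ultimately have frac: "0 < real k / CHAR('a)" "real k / CHAR('a) < 1" by auto
  have "canon_char x \<noteq> 1"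
  proof
    assume "canon_char x = 1"
    then have "exp (\<i> * complex_of_real (2 * pi * (real k / CHAR('a)))) = 1"
      by (simp add: canon_char_def k_def cis_conv_exp)
    then obtain n :: int where "2 * pi * (real k / CHAR('a)) = 2 * pi * of_int n"
      by (auto simp: exp_eq_1 mult.commute)
    then have "real k / CHAR('a) = of_int n"
      using pi_gt_zero by (metis mult_cancel_left mult_eq_0_iff less_irrefl zero_neq_numeral)
    with frac have "0 < n" "n < 1" by simp_all
    then show False by simp
  qed
  then show ?thesis by blast
qed

lemma sum_canon_char_mult:
  "(\<Sum>t\<in>UNIV. canon_char (c * t)) = (if c = 0 then of_nat CARD('a) else 0)"
  for c :: "'a::{field,finite}"
proof (cases "c = 0")
  case False
  obtain a :: 'a where a: "canon_char a \<noteq> 1" using ex_canon_char_neq_1 by blast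
  have "(\<Sum>t\<in>UNIV. canon_char (c * t)) = (\<Sum>t\<in>UNIV. canon_char (c * (t + a / c)))"
    by (rule sum.reindex_bij_witness[of _ "\<lambda>t. t + a / c" "\<lambda>t. t - a / c"]) auto
  also have "\<dots> = canon_char a * (\<Sum>t\<in>UNIV. canon_char (c * t))"
    using False by (simp add: distrib_left canon_char_add sum_distrib_left mult.commute)
  finally have "(1 - canon_char a) * (\<Sum>t\<in>UNIV. canon_char (c * t)) = 0"
    by (simp add: algebra_simps)
  then show ?thesis using a False by simp
qed simp


section \<open>Squares and Gauss sums\<close>

lemma even_card_if_involution:
  assumes "\<And>x. x \<in> X \<Longrightarrow> h x \<in> X" "\<And>x. x \<in> X \<Longrightarrow> h (h x) = x" "\<And>x. x \<in> X \<Longrightarrow> h x \<noteq> x"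
  shows "even (card X)"
proof -
  have "(\<Sum>x\<in>X. 1 :: bit) = 0"
    by (rule sum_involution_eq_0[where h = h]) (use assms in auto)
  moreover have "of_nat n = (0 :: bit) \<longleftrightarrow> even n" for n
    by (induction n) auto
  ultimately show ?thesis by simp
qed

definition nonzero_squares :: "'a::field set" where
  "nonzero_squares = (\<lambda>s. s\<^sup>2) ` (UNIV - {0})"

lemma sum_nonzero_square_fibres:
  fixes h :: "'a::{field,finite} \<Rightarrow> 'b::comm_semiring_1"
  assumes "odd CARD('a)"
  shows "(\<Sum>s\<in>UNIV - {0}. h (s\<^sup>2)) = 2 * (\<Sum>c\<in>nonzero_squares. h c)"
proof -
  have "(\<Sum>s\<in>UNIV - {0}. h (s\<^sup>2))
      = (\<Sum>c\<in>nonzero_squares. \<Sum>s\<in>{s\<in>UNIV - {0}. s\<^sup>2 = c}. h (s\<^sup>2))"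
    unfolding nonzero_squares_def by (rule sum.image_gen) simp
  also have "\<dots> = (\<Sum>c\<in>nonzero_squares. 2 * h c)"
  proof (rule sum.cong[OF refl])
    fix c :: 'a assume "c \<in> nonzero_squares"
    then obtain a where a: "a \<noteq> 0" "c = a\<^sup>2" unfolding nonzero_squares_def by auto
    then have "{s\<in>UNIV - {0}. s\<^sup>2 = c} = {a, -a}" by (auto simp: power2_eq_iff)
    moreover have "a \<noteq> -a" using a two_neq_zero_if_odd_CARD[OF assms] by (simp add: neg_equal_iff_equal)
    ultimately have "(\<Sum>s\<in>{s\<in>UNIV - {0}. s\<^sup>2 = c}. h (s\<^sup>2)) = h (a\<^sup>2) + h ((- a)\<^sup>2)"
      by simp
    then show "(\<Sum>s\<in>{s\<in>UNIV - {0}. s\<^sup>2 = c}. h (s\<^sup>2)) = 2 * h c"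
      using a by (simp add: mult_2)
  qed
  finally show ?thesis by (simp add: sum_distrib_left)
qed

lemma CARD_eq_twice_card_nonzero_squares:
  assumes "odd CARD('a::{field,finite})"
  shows "CARD('a) = 2 * card (nonzero_squares :: 'a set) + 1"
proof -
  have "CARD('a) - 1 = 2 * card (nonzero_squares :: 'a set)"
    using sum_nonzero_square_fibres[OF assms, of "\<lambda>_. 1 :: nat"] by (simp add: card_Diff_singleton)
  moreover have "CARD('a) > 0" by simp
  ultimately show ?thesis by linarith
qed

lemma even_card_nonzero_squares_if_minus_one_square:
  assumes odd: "odd CARD('a::{field,finite})" and i: "i\<^sup>2 = (-1::'a)"
  shows "even (card (nonzero_squares :: 'a set))"
proof (rule even_card_if_involution[where h = uminus])
  fix x :: 'a assume "x \<in> nonzero_squares"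
  then obtain s where s: "s \<noteq> 0" "x = s\<^sup>2" unfolding nonzero_squares_def by auto
  have "- x = (i * s)\<^sup>2" using s i by (simp add: power_mult_distrib)
  moreover have "i * s \<noteq> 0" using s i by auto
  ultimately show "- x \<in> nonzero_squares" unfolding nonzero_squares_def by blast
  show "- x \<noteq> x"
  proof
    assume "- x = x"
    then have "2 * x = 0" by (metis add_eq_0_iff2 mult_2)
    then show False using s two_neq_zero_if_odd_CARD[OF odd] by simp
  qed
qed simp_all

text \<open>Inversion has no fixed points among the nonzero squares other than \<open>1\<close>, as \<open>-1\<close> is not one.\<close>
lemma odd_card_nonzero_squares_if_minus_one_nonsquare:
  assumes no_i: "\<nexists>i::'a::{field,finite}. i\<^sup>2 = -1"
  shows "odd (card (nonzero_squares :: 'a set))"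
proof -
  let ?Q = "nonzero_squares :: 'a set"
  have one: "1 \<in> ?Q" unfolding nonzero_squares_def by (intro image_eqI[of _ _ 1]) auto
  have "even (card (?Q - {1}))"
  proof (rule even_card_if_involution[where h = inverse])
    fix x assume "x \<in> ?Q - {1}"
    then obtain s where s: "s \<noteq> 0" "x = s\<^sup>2" "x \<noteq> 1" unfolding nonzero_squares_def by auto
    then show "inverse x \<in> ?Q - {1}"
      unfolding nonzero_squares_def by (auto simp: power_inverse intro!: image_eqI[of _ _ "inverse s"])
    show "inverse x \<noteq> x"
    proof
      assume "inverse x = x"
      moreover have "x \<noteq> 0" using s by simp
      ultimately have "x * x = 1" by (metis right_inverse)
      then have "(x - 1) * (x + 1) = 0" by (simp add: algebra_simps)
      then have "x = -1" using s by (auto simp: eq_neg_iff_add_eq_0)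
      then show False using s(2) no_i by auto
    qed
  qed simp_all
  then show ?thesis using one by (auto simp: card_Diff_singleton card_gt_0_iff)
qed

lemma minus_one_square_iff_CARD_mod_4:
  assumes odd: "odd CARD('a::{field,finite})"
  shows "(\<exists>i::'a. i\<^sup>2 = -1) \<longleftrightarrow> CARD('a) mod 4 = 1"
proof
  assume "\<exists>i::'a. i\<^sup>2 = -1"
  then obtain k where "card (nonzero_squares :: 'a set) = 2 * k"
    using even_card_nonzero_squares_if_minus_one_square[OF odd] by (meson evenE)
  then show "CARD('a) mod 4 = 1"
    using CARD_eq_twice_card_nonzero_squares[OF odd] by presburger
next
  assume "CARD('a) mod 4 = 1"
  show "\<exists>i::'a. i\<^sup>2 = -1"
  proof (rule ccontr)
    assume "\<nexists>i::'a. i\<^sup>2 = -1"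
    then have "odd (card (nonzero_squares :: 'a set))"
      by (rule odd_card_nonzero_squares_if_minus_one_nonsquare)
    then obtain k where "card (nonzero_squares :: 'a set) = 2 * k + 1" by (elim oddE)
    then show False
      using \<open>CARD('a) mod 4 = 1\<close> CARD_eq_twice_card_nonzero_squares[OF odd] by presburger
  qed
qed

lemma nonzero_squares_disjoint_uminus:
  assumes "\<nexists>i::'a::field. i\<^sup>2 = -1"
  shows "nonzero_squares \<inter> uminus ` nonzero_squares = ({} :: 'a set)"
proof (rule ccontr)
  assume "nonzero_squares \<inter> uminus ` nonzero_squares \<noteq> ({} :: 'a set)"
  then obtain s u :: 'a where "s \<noteq> 0" "u \<noteq> 0" "s\<^sup>2 = - u\<^sup>2"
    unfolding nonzero_squares_def by auto
  then have "(s / u)\<^sup>2 = -1" by (simp add: power_divide)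
  with assms show False by blast
qed

lemma nonzero_squares_Un_uminus:
  assumes "odd CARD('a::{field,finite})" and "\<nexists>i::'a. i\<^sup>2 = -1"
  shows "nonzero_squares \<union> uminus ` nonzero_squares = UNIV - {0 :: 'a}"
proof -
  let ?Q = "nonzero_squares :: 'a set"
  have "card (?Q \<union> uminus ` ?Q) = card ?Q + card (uminus ` ?Q)"
    by (rule card_Un_disjoint) (simp_all add: nonzero_squares_disjoint_uminus[OF assms(2)])
  also have "\<dots> = card (UNIV - {0 :: 'a})"
    using CARD_eq_twice_card_nonzero_squares[OF assms(1)] by (simp add: card_image card_Diff_singleton)
  finally show ?thesis
    by (intro card_subset_eq) (auto simp: nonzero_squares_def)
qed

definition gauss_sum :: "'a::{field,finite} \<Rightarrow> complex" where
  "gauss_sum t = (\<Sum>s\<in>UNIV. canon_char (t * s\<^sup>2))"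

lemma gauss_sum_mult_uminus:
  assumes odd: "odd CARD('a::{field,finite})" and t: "t \<noteq> (0::'a)"
  shows "gauss_sum t * gauss_sum (- t) = of_nat CARD('a)"
proof -
  have two: "(2::'a) \<noteq> 0" by (rule two_neq_zero_if_odd_CARD[OF odd])
  have four: "(4::'a) \<noteq> 0" by (rule four_neq_zero_if_odd_CARD[OF odd])
  have "gauss_sum t * gauss_sum (- t) = (\<Sum>(s, u)\<in>UNIV. canon_char (t * ((s - u) * (s + u))))"
    unfolding gauss_sum_def sum_product sum.cartesian_product UNIV_Times_UNIV
    by (intro sum.cong refl) (auto simp: algebra_simps power2_eq_square simp flip: canon_char_add)
  also have "\<dots> = (\<Sum>(a, b)\<in>UNIV. canon_char (t * (a * b)))"
    by (rule sum.reindex_bij_witness[of _ "\<lambda>(a, b). ((a + b) / 2, (b - a) / 2)" "\<lambda>(s, u). (s - u, s + u)"])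
      (use two four in \<open>auto simp: field_simps\<close>)
  also have "\<dots> = (\<Sum>a\<in>UNIV. \<Sum>b\<in>UNIV. canon_char ((t * a) * b))"
    by (simp add: sum.cartesian_product[symmetric] mult.assoc flip: UNIV_Times_UNIV)
  also have "\<dots> = of_nat CARD('a)"
    using t by (simp add: sum_canon_char_mult)
  finally show ?thesis .
qed

lemma gauss_sum_nonzero_squares:
  assumes "odd CARD('a::{field,finite})"
  shows "gauss_sum t = 1 + 2 * (\<Sum>c\<in>nonzero_squares. canon_char (t * (c :: 'a)))"
proof -
  have "gauss_sum t = canon_char (t * 0\<^sup>2) + (\<Sum>s\<in>UNIV - {0}. canon_char (t * s\<^sup>2))"
    unfolding gauss_sum_def by (subst sum.remove[of UNIV 0]) auto
  then show ?thesis
    by (simp add: sum_nonzero_square_fibres[OF assms, where h = "\<lambda>c. canon_char (t * c)"])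
qed

text \<open>If \<open>-1\<close> is not a square, the nonzero squares and their negatives partition \<open>\<FF>\<^sub>q\<^sup>*\<close>,
  so that \<open>G(t) + G(-t) = 2 + 2 \<Sum>\<^sub>c\<^sub>\<noteq>\<^sub>0 \<chi>(t c) = 0\<close>.\<close>
lemma gauss_sum_uminus:
  assumes odd: "odd CARD('a::{field,finite})" and t: "t \<noteq> (0::'a)"
  shows "gauss_sum (- t) = (if \<exists>i::'a. i\<^sup>2 = -1 then gauss_sum t else - gauss_sum t)"
proof (cases "\<exists>i::'a. i\<^sup>2 = -1")
  case True
  then obtain i :: 'a where i: "i\<^sup>2 = -1" by blast
  then have "i \<noteq> 0" by auto
  have "gauss_sum (- t) = (\<Sum>s\<in>UNIV. canon_char (t * (i * s)\<^sup>2))"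
    unfolding gauss_sum_def by (simp add: power_mult_distrib i)
  also have "\<dots> = gauss_sum t"
    unfolding gauss_sum_def
    by (rule sum.reindex_bij_witness[of _ "\<lambda>s. s / i" "\<lambda>s. i * s"]) (use \<open>i \<noteq> 0\<close> in auto)
  finally show ?thesis using True by simp
next
  case False
  let ?Q = "nonzero_squares :: 'a set"
  note disjoint = nonzero_squares_disjoint_uminus[OF False]
  have "(\<Sum>c\<in>?Q. canon_char (- t * c)) = (\<Sum>c\<in>uminus ` ?Q. canon_char (t * c))"
    by (simp add: sum.reindex)
  then have "gauss_sum t + gauss_sum (- t) = 2 + 2 * (\<Sum>c\<in>?Q \<union> uminus ` ?Q. canon_char (t * c))"
    using disjoint by (simp add: gauss_sum_nonzero_squares[OF odd] sum.union_disjoint algebra_simps)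
  also have "(\<Sum>c\<in>?Q \<union> uminus ` ?Q. canon_char (t * c)) = -1"
    using t by (simp add: nonzero_squares_Un_uminus[OF odd False] sum_diff1 sum_canon_char_mult)
  finally show ?thesis using False by (simp add: eq_neg_iff_add_eq_0 add.commute)
qed

lemma gauss_sum_square:
  assumes odd: "odd CARD('a::{field,finite})" and t: "t \<noteq> (0::'a)"
  shows "gauss_sum t ^ 2 = (if \<exists>i::'a. i\<^sup>2 = -1 then of_nat CARD('a) else - of_nat CARD('a))"
  using gauss_sum_mult_uminus[OF odd t] gauss_sum_uminus[OF odd t]
  by (cases "\<exists>i::'a. i\<^sup>2 = -1") (simp_all add: power2_eq_square minus_equation_iff)

lemma gauss_sum_power_even:
  assumes odd: "odd CARD('a::{field,finite})" and t: "t \<noteq> (0::'a)"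
  shows "gauss_sum t ^ (2 * k)
    = (if (\<exists>i::'a. i\<^sup>2 = -1) \<or> even k then 1 else -1) * of_nat CARD('a) ^ k"
  by (simp add: power_mult gauss_sum_square[OF odd t] power_minus')


section \<open>Character sums on \<open>\<FF>\<^sub>q\<^sup>d\<close>\<close>

lemma sum_vec_prod_eq_prod_sum:
  fixes f :: "'n::finite \<Rightarrow> 'a::finite \<Rightarrow> 'b::comm_semiring_1"
  shows "(\<Sum>v::'a^'n\<in>UNIV. \<Prod>i\<in>UNIV. f i (v $ i)) = (\<Prod>i\<in>UNIV. \<Sum>s\<in>UNIV. f i s)"
proof -
  have "bij (vec_nth :: 'a^'n \<Rightarrow> 'n \<Rightarrow> 'a)"
    by (intro bij_betwI[of _ _ _ vec_lambda]) (auto simp: vec_eq_iff)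
  then have "(\<Sum>v::'a^'n\<in>UNIV. \<Prod>i\<in>UNIV. f i (v $ i)) = (\<Sum>g\<in>UNIV. \<Prod>i\<in>UNIV. f i (g i))"
    by (rule sum.reindex_bij_betw)
  also have "\<dots> = (\<Prod>i\<in>UNIV. \<Sum>s\<in>UNIV. f i s)"
    by (simp add: prod_sum_PiE[of UNIV "\<lambda>_. UNIV"] PiE_UNIV)
  finally show ?thesis .
qed

lemma sum_canon_char_quadratic:
  fixes t b :: "'a::{field,finite}"
  assumes odd: "odd CARD('a)" and t: "t \<noteq> 0"
  shows "(\<Sum>s\<in>UNIV. canon_char (t * s\<^sup>2 + s * b)) = canon_char (- (b\<^sup>2 / (4 * t))) * gauss_sum t"
proof -
  have two: "(2::'a) \<noteq> 0" by (rule two_neq_zero_if_odd_CARD[OF odd])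
  define c where "c = b / (2 * t)"
  have b: "b = 2 * t * c" using two t by (simp add: c_def)
  have square: "t * (s - c)\<^sup>2 + (s - c) * b = t * s\<^sup>2 + - (b\<^sup>2 / (4 * t))" for s
    using t four_neq_zero_if_odd_CARD[OF odd] by (simp add: b power2_eq_square field_simps)
  have "(\<Sum>s\<in>UNIV. canon_char (t * s\<^sup>2 + s * b)) = (\<Sum>s\<in>UNIV. canon_char (t * (s - c)\<^sup>2 + (s - c) * b))"
    by (rule sum.reindex_bij_witness[of _ "\<lambda>s. s - c" "\<lambda>s. s + c"]) auto
  also have "\<dots> = canon_char (- (b\<^sup>2 / (4 * t))) * gauss_sum t"
    by (simp only: square canon_char_add) (simp add: gauss_sum_def sum_distrib_right mult.commute)
  finally show ?thesis .
qed

lemma sum_canon_char_quadratic_form: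
  fixes u :: "'a::{field,finite} ^ 'n::finite"
  assumes odd: "odd CARD('a)" and t: "t \<noteq> 0"
  shows "(\<Sum>m\<in>UNIV. canon_char (t * qnorm m + dotp m u))
    = gauss_sum t ^ CARD('n) * canon_char (- (qnorm u / (4 * t)))"
proof -
  have "(\<Sum>m\<in>UNIV. canon_char (t * qnorm m + dotp m u))
      = (\<Sum>m::'a^'n\<in>UNIV. \<Prod>i\<in>UNIV. canon_char (t * (m $ i)\<^sup>2 + m $ i * u $ i))"
    by (simp add: qnorm_def dotp_def sum_distrib_left canon_char_sum flip: sum.distrib)
  also have "\<dots> = (\<Prod>i\<in>UNIV. canon_char (- ((u $ i)\<^sup>2 / (4 * t))) * gauss_sum t)"
    by (simp only: sum_vec_prod_eq_prod_sum[where f = "\<lambda>i s. canon_char (t * s\<^sup>2 + s * u $ i)"]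
        sum_canon_char_quadratic[OF odd t])
  also have "\<dots> = gauss_sum t ^ CARD('n) * canon_char (- (qnorm u / (4 * t)))"
    by (simp add: prod.distrib qnorm_def canon_char_sum sum_divide_distrib flip: sum_negf)
  finally show ?thesis .
qed

lemma sum_canon_char_dotp:
  fixes u :: "'a::{field,finite} ^ 'n::finite"
  shows "(\<Sum>m\<in>UNIV. canon_char (dotp m u)) = (if u = 0 then of_nat CARD('a) ^ CARD('n) else 0)"
proof -
  have "(\<Sum>m\<in>UNIV. canon_char (dotp m u)) = (\<Prod>i\<in>UNIV. \<Sum>s\<in>UNIV. canon_char (u $ i * s))"
    by (simp add: dotp_def canon_char_sum mult.commute flip: sum_vec_prod_eq_prod_sum)
  also have "\<dots> = (\<Prod>i\<in>UNIV. if u $ i = 0 then of_nat CARD('a) else 0)"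
    by (simp only: sum_canon_char_mult)
  also have "\<dots> = (if u = 0 then of_nat CARD('a) ^ CARD('n) else 0)"
    by (auto simp: vec_eq_iff)
  finally show ?thesis .
qed

lemma sum_canon_char_reciprocal:
  fixes c :: "'a::{field,finite}"
  assumes odd: "odd CARD('a)"
  shows "(\<Sum>t\<in>UNIV - {0}. canon_char (- (c / (4 * t)))) = (if c = 0 then of_nat CARD('a) else 0) - 1"
proof -
  have four: "(4::'a) \<noteq> 0" by (rule four_neq_zero_if_odd_CARD[OF odd])
  define \<phi> where "\<phi> t = - inverse (4 * t)" for t :: 'a
  have \<phi>_involution: "\<phi> (\<phi> t) = t" for t
    using four by (cases "t = 0") (simp_all add: \<phi>_def field_simps)
  have \<phi>_nonzero: "\<phi> t \<noteq> 0" if "t \<noteq> 0" for t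
    using four that by (simp add: \<phi>_def)
  have canon_char_\<phi>: "canon_char (c * \<phi> t) = canon_char (- (c / (4 * t)))" for t
    by (simp only: \<phi>_def divide_inverse mult_minus_right)
  have "(\<Sum>t\<in>UNIV - {0}. canon_char (- (c / (4 * t)))) = (\<Sum>s\<in>UNIV - {0}. canon_char (c * s))"
    by (rule sum.reindex_bij_witness[of _ \<phi> \<phi>]) (simp_all add: \<phi>_involution \<phi>_nonzero canon_char_\<phi>)
  also have "\<dots> = (\<Sum>s\<in>UNIV. canon_char (c * s)) - 1"
    by (simp add: sum_diff1)
  finally show ?thesis by (simp add: sum_canon_char_mult)
qed

lemma sum_canon_char_null_cone:
  fixes u :: "'a::{field,finite} ^ 'n::finite"
  assumes odd: "odd CARD('a)" and g: "\<And>t::'a. t \<noteq> 0 \<Longrightarrow> gauss_sum t ^ CARD('n) = g"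
  shows "of_nat CARD('a) * (\<Sum>m\<in>{m. qnorm m = 0}. canon_char (dotp m u))
    = (if u = 0 then of_nat CARD('a) ^ CARD('n) else 0)
      + g * ((if qnorm u = 0 then of_nat CARD('a) else 0) - 1)"
proof -
  have "of_nat CARD('a) * (\<Sum>m\<in>{m. qnorm m = 0}. canon_char (dotp m u))
      = (\<Sum>m\<in>UNIV. if qnorm m = 0 then of_nat CARD('a) * canon_char (dotp m u) else 0)"
    by (simp add: sum_distrib_left sum.inter_filter[symmetric])
  also have "\<dots> = (\<Sum>m\<in>UNIV. (\<Sum>t\<in>UNIV. canon_char (qnorm m * t)) * canon_char (dotp m u))"
    by (intro sum.cong) (auto simp: sum_canon_char_mult)
  also have "\<dots> = (\<Sum>t\<in>UNIV. \<Sum>m\<in>UNIV. canon_char (t * qnorm m + dotp m u))"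
    by (subst sum.swap) (simp add: sum_distrib_left sum_distrib_right canon_char_add mult.commute)
  also have "\<dots> = (\<Sum>m\<in>UNIV. canon_char (dotp m u))
      + (\<Sum>t\<in>UNIV - {0}. g * canon_char (- (qnorm u / (4 * t))))"
    by (subst sum.remove[of UNIV "0::'a"]) (simp_all add: sum_canon_char_quadratic_form[OF odd] g)
  also have "\<dots> = (if u = 0 then of_nat CARD('a) ^ CARD('n) else 0)
      + g * ((if qnorm u = 0 then of_nat CARD('a) else 0) - 1)"
    by (simp add: sum_canon_char_dotp sum_canon_char_reciprocal[OF odd] flip: sum_distrib_left)
  finally show ?thesis .
qed


section \<open>Null pairs and the Fourier transform\<close>

lemma norm_ff_fourier_square:
  fixes A :: "('a::{field,finite} ^ 'n::finite) set"
  shows "complex_of_real (real CARD('a) ^ (2 * CARD('n)) * (cmod (ff_fourier A m))^2)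
    = (\<Sum>x\<in>A. \<Sum>y\<in>A. canon_char (dotp m (y - x)))"
proof -
  define F where "F = (\<Sum>x\<in>A. canon_char (- dotp m x))"
  have "real CARD('a) ^ (2 * CARD('n)) * (cmod (ff_fourier A m))^2 = (cmod F)^2"
    by (simp add: ff_fourier_def F_def norm_mult norm_divide norm_power power_mult_distrib
        power_divide mult.commute[of "CARD('n)"] flip: power_mult)
  then have "complex_of_real (real CARD('a) ^ (2 * CARD('n)) * (cmod (ff_fourier A m))^2) = F * cnj F"
    using complex_norm_square[of F] by simp
  also have "\<dots> = (\<Sum>x\<in>A. \<Sum>y\<in>A. canon_char (- dotp m x) * cnj (canon_char (- dotp m y)))"
    unfolding F_def cnj_sum by (rule sum_product)
  also have "\<dots> = (\<Sum>x\<in>A. \<Sum>y\<in>A. canon_char (dotp m (y - x)))"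
    by (simp add: canon_char_uminus [symmetric] canon_char_add [symmetric] dotp_def
        right_diff_distrib sum_subtractf)
  finally show ?thesis .
qed

lemma ZR_eq_sum:
  fixes A :: "('a::{field,finite} ^ 'n::finite) set"
  shows "of_nat (ZR A) = (\<Sum>x\<in>A. \<Sum>y\<in>A. if qnorm (y - x) = 0 then 1 else (0 :: 'b::semiring_1))"
proof -
  have qnorm_commute: "qnorm (x - y) = qnorm (y - x)" for x y :: "'a ^ 'n"
    unfolding qnorm_def by (simp add: power2_commute)
  have "ZR A = card {p \<in> A \<times> A. qnorm (snd p - fst p) = 0}"
    unfolding ZR_def by (rule arg_cong[where f = card]) (auto simp: qnorm_commute)
  then have "of_nat (ZR A) = (\<Sum>p\<in>A \<times> A. if qnorm (snd p - fst p) = 0 then 1 else (0 :: 'b))"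
    by (simp add: sum.inter_filter[symmetric])
  then show ?thesis
    unfolding sum.cartesian_product by (simp add: case_prod_beta)
qed

lemma Omega0_identity:
  fixes A :: "('a::{field,finite} ^ 'n::finite) set"
  assumes odd: "odd CARD('a)" and g: "\<And>t::'a. t \<noteq> 0 \<Longrightarrow> gauss_sum t ^ CARD('n) = g"
  shows "of_nat CARD('a) * complex_of_real (real CARD('a) ^ (2 * CARD('n)) * Omega0 A)
    = of_nat CARD('a) ^ CARD('n) * of_nat (card A)
      + g * (of_nat CARD('a) * of_nat (ZR A) - of_nat (card A) ^ 2)"
proof -
  let ?q = "of_nat CARD('a) :: complex" and ?Z = "{m::'a^'n. qnorm m = 0}"
  have "complex_of_real (real CARD('a) ^ (2 * CARD('n)) * Omega0 A)
      = (\<Sum>m\<in>?Z. \<Sum>x\<in>A. \<Sum>y\<in>A. canon_char (dotp m (y - x)))"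
    unfolding Omega0_def by (simp only: sum_distrib_left of_real_sum norm_ff_fourier_square)
  also have "\<dots> = (\<Sum>x\<in>A. \<Sum>m\<in>?Z. \<Sum>y\<in>A. canon_char (dotp m (y - x)))"
    by (rule sum.swap)
  also have "\<dots> = (\<Sum>x\<in>A. \<Sum>y\<in>A. \<Sum>m\<in>?Z. canon_char (dotp m (y - x)))"
    by (intro sum.cong refl sum.swap)
  finally have "?q * complex_of_real (real CARD('a) ^ (2 * CARD('n)) * Omega0 A)
      = (\<Sum>x\<in>A. \<Sum>y\<in>A. ?q * (\<Sum>m\<in>?Z. canon_char (dotp m (y - x))))"
    by (simp add: sum_distrib_left)
  also have "\<dots> = (\<Sum>x\<in>A. \<Sum>y\<in>A. (if y = x then ?q ^ CARD('n) else 0)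
      + g * ((if qnorm (y - x) = 0 then ?q else 0) - 1))"
    by (simp add: sum_canon_char_null_cone[OF odd g])
  also have "\<dots> = (\<Sum>x\<in>A. \<Sum>y\<in>A. if y = x then ?q ^ CARD('n) else 0)
      + g * ((\<Sum>x\<in>A. \<Sum>y\<in>A. if qnorm (y - x) = 0 then ?q else 0) - of_nat (card A) ^ 2)"
    by (simp add: sum.distrib sum_subtractf sum_distrib_left right_diff_distrib power2_eq_square)
  also have "\<dots> = ?q ^ CARD('n) * of_nat (card A) + g * (?q * of_nat (ZR A) - of_nat (card A) ^ 2)"
  proof -
    have "?q * of_nat (ZR A) = (\<Sum>x\<in>A. \<Sum>y\<in>A. if qnorm (y - x) = 0 then ?q else 0)"
      unfolding ZR_eq_sum sum_distrib_left by (intro sum.cong) auto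
    then show ?thesis by (simp add: sum.delta)
  qed
  finally show ?thesis .
qed

lemma solve_Omega0_identity:
  fixes q a R \<Omega> \<epsilon> :: real and k :: nat
  assumes q: "q > 0" and k: "k \<ge> 1" and \<epsilon>: "\<epsilon>^2 = 1"
    and identity: "q * (q ^ (4 * k) * \<Omega>) = q ^ (2 * k) * a + \<epsilon> * q ^ k * (q * R - a^2)"
  shows "R / 2 = a^2 / (2 * q) + \<epsilon> * q ^ (3 * k) / 2 * \<Omega> - \<epsilon> * q ^ (k - 1) * a / 2"
proof -
  define Q where "Q = q ^ k"
  have "Q > 0" using q by (simp add: Q_def)
  have powers: "q ^ (4 * k) = Q ^ 4" "q ^ (2 * k) = Q^2" "q ^ (3 * k) = Q ^ 3" "q ^ (k - 1) = Q / q"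
    using q k by (simp_all add: Q_def mult.commute power_mult power_diff)
  have "Q * (q * R - a^2) = Q * (\<epsilon> * q * Q ^ 3 * \<Omega> - \<epsilon> * Q * a)"
    using identity \<epsilon> unfolding powers Q_def[symmetric] by algebra
  then have "q * R - a^2 = \<epsilon> * q * Q ^ 3 * \<Omega> - \<epsilon> * Q * a"
    using \<open>Q > 0\<close> by simp
  then have "R * q = a^2 + \<epsilon> * q * Q ^ 3 * \<Omega> - \<epsilon> * Q * a"
    by algebra
  then have R: "R = (a^2 + \<epsilon> * q * Q ^ 3 * \<Omega> - \<epsilon> * Q * a) / q"
    using q by (simp add: eq_divide_eq)
  show ?thesis
    unfolding powers R using q by (simp add: field_simps)
qed

lemma ZR_eq_Omega0_formula:
  fixes A :: "('a::{field,finite} ^ 'n::finite) set" and \<epsilon> :: real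
  assumes odd: "odd CARD('a)" and d: "CARD('n) = 2 * k" and \<epsilon>: "\<epsilon>^2 = 1"
    and g: "\<And>t::'a. t \<noteq> 0 \<Longrightarrow> gauss_sum t ^ CARD('n) = of_real \<epsilon> * of_nat CARD('a) ^ k"
  shows "real (ZR A) / 2 = real (card A)^2 / (2 * real CARD('a))
    + \<epsilon> * real CARD('a) ^ (3 * k) / 2 * Omega0 A - \<epsilon> * real CARD('a) ^ (k - 1) * real (card A) / 2"
proof (rule solve_Omega0_identity[OF _ _ \<epsilon>])
  show "k \<ge> 1" using d by (cases k) auto
  have "complex_of_real (real CARD('a) * (real CARD('a) ^ (4 * k) * Omega0 A))
      = complex_of_real (real CARD('a) ^ (2 * k) * real (card A)
        + \<epsilon> * real CARD('a) ^ k * (real CARD('a) * real (ZR A) - (real (card A))^2))"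
    using Omega0_identity[OF odd g, of A] d by (simp add: mult_ac power_mult)
  then show "real CARD('a) * (real CARD('a) ^ (4 * k) * Omega0 A)
      = real CARD('a) ^ (2 * k) * real (card A)
        + \<epsilon> * real CARD('a) ^ k * (real CARD('a) * real (ZR A) - (real (card A))^2)"
    by (simp only: of_real_eq_iff)
qed simp

theorem proposition3p5:
  fixes A :: "('a::{field,finite} ^ 'n::finite) set"
  assumes "odd CARD('a)" and "even CARD('n)"
  shows "(CARD('n) mod 4 = 2 \<and> CARD('a) mod 4 = 3 \<longrightarrow>
            real (ZR A) / 2 = real (card A)^2 / (2 * real CARD('a))
              - real CARD('a) ^ (3 * CARD('n) div 2) / 2 * Omega0 A
              + real CARD('a) ^ ((CARD('n) - 2) div 2) * real (card A) / 2)
       \<and> (CARD('n) mod 4 = 0 \<or> (CARD('n) mod 4 = 2 \<and> CARD('a) mod 4 = 1) \<longrightarrow>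
            real (ZR A) / 2 = real (card A)^2 / (2 * real CARD('a))
              + real CARD('a) ^ (3 * CARD('n) div 2) / 2 * Omega0 A
              - real CARD('a) ^ ((CARD('n) - 2) div 2) * real (card A) / 2)"
proof -
  note odd = assms(1)
  obtain k where d: "CARD('n) = 2 * k" using assms(2) by (elim evenE)
  have exponents: "3 * CARD('n) div 2 = 3 * k" "(CARD('n) - 2) div 2 = k - 1" using d by simp_all
  have formula: "real (ZR A) / 2 = real (card A)^2 / (2 * real CARD('a))
      + \<epsilon> * real CARD('a) ^ (3 * k) / 2 * Omega0 A - \<epsilon> * real CARD('a) ^ (k - 1) * real (card A) / 2"
    if "\<epsilon> = (if (\<exists>i::'a. i\<^sup>2 = -1) \<or> even k then 1 else -1)" for \<epsilon>
    using odd d by (rule ZR_eq_Omega0_formula) (use that gauss_sum_power_even[OF odd] in \<open>simp_all add: d\<close>)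
  show ?thesis
  proof (intro conjI impI)
    assume "CARD('n) mod 4 = 2 \<and> CARD('a) mod 4 = 3"
    then have "\<not> (\<exists>i::'a. i\<^sup>2 = -1)" "odd k"
      using minus_one_square_iff_CARD_mod_4[OF odd] d by auto
    then show "real (ZR A) / 2 = real (card A)^2 / (2 * real CARD('a))
              - real CARD('a) ^ (3 * CARD('n) div 2) / 2 * Omega0 A
              + real CARD('a) ^ ((CARD('n) - 2) div 2) * real (card A) / 2"
      using formula[of "-1"] unfolding exponents by simp
  next
    assume "CARD('n) mod 4 = 0 \<or> (CARD('n) mod 4 = 2 \<and> CARD('a) mod 4 = 1)"
    then have "(\<exists>i::'a. i\<^sup>2 = -1) \<or> even k"
      using minus_one_square_iff_CARD_mod_4[OF odd] d by auto
    then show "real (ZR A) / 2 = real (card A)^2 / (2 * real CARD('a))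
              + real CARD('a) ^ (3 * CARD('n) div 2) / 2 * Omega0 A
              - real CARD('a) ^ ((CARD('n) - 2) div 2) * real (card A) / 2"
      using formula[of 1] unfolding exponents by simp
  qed
qed

end
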